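(* Let $q$ be a prime with $q \equiv 1 \pmod 6$ or $q = 3$. Let $j \in \{3,6\}$ and let $s$ be an integer with $0 \le s < q$ such that $\Phi_j(s) \equiv 0 \pmod q$, where $\Phi_3(x) = x^2+x+1$ and $\Phi_6(x) = x^2-x+1$. Define $p_6(x) = \Phi_4(qx+s) = (qx+s)^2+1 \in \mathbb{Z}[x]$, \[ n_6(x)= \begin{cases} qx^2+(2s+1)x+\Phi_3(s)/q, & \text{if } q \mid \Phi_3(s),\\ qx^2+(2s-1)x+\Phi_6(s)/q, & \text{if } q \mid \Phi_6(s),\end{cases} \qquad t_6(x)= \begin{cases} 1-qx-s, & \text{if } q \mid \Phi_3(s),\\ 1+qx+s, & \text{if } q \mid \Phi_6(s).\end{cases} \] Then: (i) $q\,n_6(x) = p_6(x)+1-t_6(x)$; (ii) $q\,n_6(x)$ divides $\Phi_6(p_6(x))$ in $\mathbb{Z}[x]$; (iii) $t_6(x)^2-4p_6(x) \le 0$ for all $x$; (iv) $n_6(x)$ and $p_6(x)$ are irreducible over $\mathbb{Z}$; that is, $(n_6(x),p_6(x),t_6(x))$ parameterizes a family of generalized MNT elliptic curves with embedding degree $6$ in the sense described in the context. Moreover, for every integer $x$, if one writes $t_6(x)^2-4p_6(x) = \Delta Y^2$ with $\Delta<0$ a square-free integer and $Y \in \mathbb{Z}$, then \[ X^2 + 3\Delta Y^2 = -8, \qquad \text{where } X = \begin{cases} 3(qx+s)+1, & \text{if } q \mid \Phi_3(s),\\ 3(qx+s)-1, & \text{if } q \mid \Phi_6(s).\end{cases}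 \]
   Context: $\Phi_k(x)$ denotes the $k$th cyclotomic polynomial; $\Phi_3(x)=x^2+x+1$, $\Phi_4(x)=x^2+1$, $\Phi_6(x)=x^2-x+1$. A polynomial in $\mathbb{Z}[x]$ is called irreducible over $\mathbb{Z}$ if it is not a product of two non-constant polynomials with integer coefficients. For $k\in\{3,4,6\}$ and a prime $q$, a triple $(n_k(x),p_k(x),t_k(x))$ of polynomials in $\mathbb{Z}[x]$ is said to parameterize a family of generalized MNT elliptic curves with embedding degree $k$ if $q\,n_k(x) = p_k(x)+1-t_k(x)$, $q\,n_k(x) \mid \Phi_k(p_k(x))$, $t_k(x)^2-4p_k(x) \le 0$, and $n_k(x), p_k(x)$ are irreducible over $\mathbb{Z}$. (The paper's definition is stated for primes $q \equiv 1 \pmod k$, but the theorem is asserted also for $q=3$; the conclusion is therefore written out as the four listed properties.) *)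

theory Defs
  imports "HOL-Computational_Algebra.Computational_Algebra"
begin

definition Phi3 :: "int poly" where "Phi3 = [:1, 1, 1:]"
definition Phi4 :: "int poly" where "Phi4 = [:1, 0, 1:]"
definition Phi6 :: "int poly" where "Phi6 = [:1, -1, 1:]"

definition Phi :: "nat \<Rightarrow> int poly" where
  "Phi k = (if k = 3 then Phi3 else if k = 4 then Phi4 else if k = 6 then Phi6 else 0)"

definition irreducible_Z :: "int poly \<Rightarrow> bool" where
  "irreducible_Z f \<longleftrightarrow> \<not> (\<exists>a b. degree a > 0 \<and> degree b > 0 \<and> f = a * b)"

definition p6 :: "int \<Rightarrow> int \<Rightarrow> int poly" where
  "p6 q s = pcompose Phi4 [:s, q:]"

definition n6 :: "int \<Rightarrow> int \<Rightarrow> int poly" where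
  "n6 q s = (if q dvd poly Phi3 s then [:poly Phi3 s div q, 2*s+1, q:]
             else [:poly Phi6 s div q, 2*s-1, q:])"

definition t6 :: "int \<Rightarrow> int \<Rightarrow> int poly" where
  "t6 q s = (if q dvd poly Phi3 s then [:1 - s, -q:] else [:1 + s, q:])"

definition X6 :: "int \<Rightarrow> int \<Rightarrow> int \<Rightarrow> int" where
  "X6 q s x = (if q dvd poly Phi3 s then 3*(q*x+s) + 1 else 3*(q*x+s) - 1)"

end

theory Submission
  imports Defs
begin

(* Put u = qx + s, so that p6 = u^2 + 1. The two cases q | Phi3(s) and q | Phi6(s) are the
   cases e = 1 and e = -1 of a single family in which q n6 = u^2 + e u + 1 (that is, Phi3(u)
   or Phi6(u)), t6 = 1 - e u and X6 = 3u + e. Everything then reduces to identities in u: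
   Phi6(u^2 + 1) = Phi3(u) Phi6(u) gives the divisibility,
   t6^2 - 4 p6 = -(2u^2 + (u + e)^2 + 2) is negative, and X6^2 + 3 (t6^2 - 4 p6) = -8.
   Both n6 and p6 are quadratics of negative discriminant, hence have no linear factor. *)

lemma map_poly_of_int_add:
  "map_poly (of_int :: int \<Rightarrow> 'a::comm_ring_1) (f + g) = map_poly of_int f + map_poly of_int g"
  by (simp add: poly_eq_iff coeff_map_poly)

lemma map_poly_of_int_diff:
  "map_poly (of_int :: int \<Rightarrow> 'a::comm_ring_1) (f - g) = map_poly of_int f - map_poly of_int g"
  by (simp add: poly_eq_iff coeff_map_poly)

lemma map_poly_of_int_mult:
  "map_poly (of_int :: int \<Rightarrow> 'a::comm_ring_1) (f * g) = map_poly of_int f * map_poly of_int g"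
  by (simp add: poly_eq_iff coeff_map_poly coeff_mult)

lemma map_poly_of_int_smult:
  "map_poly (of_int :: int \<Rightarrow> 'a::comm_ring_1) (smult c f) = smult (of_int c) (map_poly of_int f)"
  by (simp add: poly_eq_iff coeff_map_poly)

lemma map_poly_of_int_pcompose:
  "map_poly (of_int :: int \<Rightarrow> 'a::comm_ring_1) (pcompose f g) =
    pcompose (map_poly of_int f) (map_poly of_int g)"
  by (induction f)
    (simp_all add: pcompose_pCons map_poly_pCons map_poly_of_int_add map_poly_of_int_mult)

lemma irreducible_Z_quadratic:
  fixes f :: "int poly"
  assumes "degree f = 2" and "(coeff f 1)^2 < 4 * coeff f 0 * coeff f 2"
  shows "irreducible_Z f"
  unfolding irreducible_Z_def
proof
  assume "\<exists>a b. degree a > 0 \<and> degree b > 0 \<and> f = a * b"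
  then obtain a b where ab: "degree a > 0" "degree b > 0" "f = a * b" by blast
  then have "degree f = degree a + degree b" by (auto intro: degree_mult_eq)
  then have "degree a = 1" "degree b = 1" using ab assms(1) by auto
  then obtain a0 a1 b0 b1 where "a = [:a0, a1:]" "b = [:b0, b1:]"
    by (metis degree1_coeffs)
  then have "f = [:a0*b0, a0*b1 + a1*b0, a1*b1:]"
    using ab by simp
  then have "(a0*b1 + a1*b0)^2 < 4 * (a0*b0) * (a1*b1)"
    using assms(2) by (simp add: numeral_2_eq_2)
  moreover have "(a0*b1 + a1*b0)^2 - 4 * (a0*b0) * (a1*b1) = (a0*b1 - a1*b0)^2"
    by algebra
  ultimately show False
    by (smt (verit) zero_le_power2)
qed

lemma Phi6_pcompose_Phi4: "pcompose Phi6 Phi4 = Phi3 * Phi6"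
  by (rule poly_ext) (simp add: Phi3_def Phi4_def Phi6_def poly_pcompose algebra_simps)

lemma pcompose_Phi6_p6:
  "pcompose (Phi 6) (p6 q s) = pcompose Phi3 [:s, q:] * pcompose Phi6 [:s, q:]"
  by (simp add: Phi_def p6_def pcompose_assoc Phi6_pcompose_Phi4 pcompose_mult)

lemma p6_eq: "p6 q s = [:s^2 + 1, 2*q*s, q^2:]"
  by (rule poly_ext) (simp add: p6_def Phi4_def poly_pcompose algebra_simps power2_eq_square)

lemma poly_p6:
  fixes x :: "'a::comm_ring_1"
  shows "poly (map_poly of_int (p6 q s)) x = (of_int q * x + of_int s)^2 + 1"
  by (simp add: p6_def Phi4_def map_poly_of_int_pcompose map_poly_pCons poly_pcompose
      power2_eq_square ac_simps)

lemma irreducible_Z_p6: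
  assumes "q \<noteq> 0"
  shows "irreducible_Z (p6 q s)"
proof -
  have "(2*q*s)^2 < 4 * (s^2 + 1) * q^2"
    using assms by (simp add: power_mult_distrib algebra_simps)
  then show ?thesis
    unfolding p6_eq using assms by (intro irreducible_Z_quadratic) (auto simp: numeral_2_eq_2)
qed

lemma n6_t6_X6_signed:
  assumes "j \<in> {3, 6}" and "q dvd poly (Phi j) s"
  obtains e c :: int where "e = 1 \<or> e = -1" and "q * c = s^2 + e*s + 1"
    and "n6 q s = [:c, 2*s + e, q:]" and "t6 q s = [:1 - e*s, -e*q:]"
    and "\<And>x. X6 q s x = 3*(q*x + s) + e"
proof (cases "q dvd poly Phi3 s")
  case True
  then show ?thesis
    by (intro that[of 1 "poly Phi3 s div q"])
      (auto simp: n6_def t6_def X6_def Phi3_def power2_eq_square algebra_simps)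
next
  case False
  with assms have "q dvd poly Phi6 s"
    by (auto simp: Phi_def)
  with False show ?thesis
    by (intro that[of "-1" "poly Phi6 s div q"])
      (auto simp: n6_def t6_def X6_def Phi6_def power2_eq_square algebra_simps)
qed

lemma smult_n6_signed_eq:
  assumes "q * c = s^2 + e*s + 1"
  shows "smult q [:c, 2*s + e, q:] = p6 q s + 1 - [:1 - e*s, -e*q:]"
  by (rule poly_ext) (use assms in \<open>simp add: p6_eq power2_eq_square algebra_simps\<close>)

lemma smult_n6_signed_dvd:
  assumes "e = 1 \<or> e = -1" and "q * c = s^2 + e*s + 1"
  shows "smult q [:c, 2*s + e, q:] dvd pcompose (Phi 6) (p6 q s)"
proof -
  have "smult q [:c, 2*s + e, q:] = pcompose [:1, e, 1:] [:s, q:]"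
    by (rule poly_ext) (use assms(2) in \<open>simp add: poly_pcompose power2_eq_square algebra_simps\<close>)
  with assms(1) show ?thesis
    unfolding pcompose_Phi6_p6 Phi3_def Phi6_def by auto
qed

lemma irreducible_Z_n6_signed:
  assumes "q \<noteq> 0" and "e^2 = 1" and "q * c = s^2 + e*s + 1"
  shows "irreducible_Z [:c, 2*s + e, q:]"
proof -
  have "(2*s + e)^2 = 4 * (q * c) - 3"
    using assms(2,3) by (simp add: power2_eq_square algebra_simps)
  then show ?thesis
    using assms(1) by (intro irreducible_Z_quadratic) (auto simp: numeral_2_eq_2 ac_simps)
qed

lemma signed_discriminant_neg:
  fixes e v :: "'a::linordered_idom"
  assumes "e^2 = 1"
  shows "(1 - e*v)^2 - 4 * (v^2 + 1) < 0"
proof -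
  have "(1 - e*v)^2 - 4 * (v^2 + 1) = - (2 * v^2 + (v + e)^2 + 2)"
    using assms by algebra
  moreover have "0 \<le> 2 * v^2 + (v + e)^2"
    by simp
  ultimately show ?thesis
    by linarith
qed

lemma signed_cm_identity:
  fixes e v :: "'a::comm_ring_1"
  assumes "e^2 = 1"
  shows "(3*v + e)^2 + 3 * ((1 - e*v)^2 - 4 * (v^2 + 1)) = -8"
proof -
  have "(1 - e*v)^2 = 1 - 2*e*v + v^2" and "(3*v + e)^2 = 9*v^2 + 6*e*v + 1"
    using assms by (simp_all add: power2_diff power2_sum power_mult_distrib algebra_simps)
  then show ?thesis
    by (simp only:) (simp add: algebra_simps)
qed

theorem theorem1:
  fixes q s :: int and j :: nat
  assumes "prime q" and "q mod 6 = 1 \<or> q = 3"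
    and "j \<in> {3, 6}" and "0 \<le> s" and "s < q"
    and "q dvd poly (Phi j) s"
  shows "smult q (n6 q s) = p6 q s + 1 - t6 q s
    \<and> smult q (n6 q s) dvd pcompose (Phi 6) (p6 q s)
    \<and> (\<forall>x::real. poly (map_poly of_int ((t6 q s)^2 - smult 4 (p6 q s))) x \<le> 0)
    \<and> irreducible_Z (n6 q s) \<and> irreducible_Z (p6 q s)
    \<and> (\<forall>x \<Delta> Y :: int. \<Delta> < 0 \<longrightarrow> squarefree \<Delta> \<longrightarrow>
         (poly (t6 q s) x)^2 - 4 * poly (p6 q s) x = \<Delta> * Y^2 \<longrightarrow>
         (X6 q s x)^2 + 3 * \<Delta> * Y^2 = -8)"
proof -
  \<comment> \<open>Only \<open>q \<noteq> 0\<close> and \<open>q dvd poly (Phi j) s\<close> are needed; the last claim holds for all \<open>\<Delta>\<close>, \<open>Y\<close>.\<close>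
  have "q \<noteq> 0"
    using assms(1) by auto
  obtain e c where e: "e = 1 \<or> e = -1" and c: "q * c = s^2 + e*s + 1"
    and n6: "n6 q s = [:c, 2*s + e, q:]" and t6: "t6 q s = [:1 - e*s, -e*q:]"
    and X6: "\<And>x. X6 q s x = 3*(q*x + s) + e"
    using n6_t6_X6_signed[OF assms(3,6)] by blast
  have e2: "e^2 = 1"
    using e by auto
  have "(of_int e :: real)^2 = 1"
    using e by auto
  then have "poly (map_poly of_int ((t6 q s)^2 - smult 4 (p6 q s))) x < 0" for x :: real
    using signed_discriminant_neg[of "of_int e" "of_int q * x + of_int s"]
    by (simp add: t6 poly_p6 map_poly_of_int_diff map_poly_of_int_mult map_poly_of_int_smult
        map_poly_pCons power2_eq_square algebra_simps)
  moreover have "(X6 q s x)^2 + 3 * (\<Delta> * Y^2) = -8"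
    if "(poly (t6 q s) x)^2 - 4 * poly (p6 q s) x = \<Delta> * Y^2" for x \<Delta> Y :: int
    using signed_cm_identity[OF e2, of "q*x + s"] poly_p6[of q s x] that
    by (simp add: X6 t6 algebra_simps)
  ultimately show ?thesis
    using smult_n6_signed_eq[OF c] smult_n6_signed_dvd[OF e c]
      irreducible_Z_n6_signed[OF \<open>q \<noteq> 0\<close> e2 c] irreducible_Z_p6[OF \<open>q \<noteq> 0\<close>]
    by (auto simp: n6 t6 less_imp_le mult.assoc)
qed

end
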